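(* Let $r>0$, $\varepsilon\in(0,1)$, $n\geq 1$ an integer, and $T\subset rB_2^d$ with $|T|\geq(\frac{2}{\varepsilon}+1)^n$. Then there exist vectors $t_k,s_k\in T$ and $u_k,v_k\in\mathbb{R}^d$, $k=1,\dots,n$, such that for every $k$, $0\neq t_k-s_k=u_k+v_k$ and $|v_k|\leq\varepsilon r$, and the vectors $u_1,\dots,u_n$ are pairwise orthogonal.
   Context: $B_2^d$ is the Euclidean unit ball in $\mathbb{R}^d$, $|\cdot|$ the Euclidean norm, $|T|$ the cardinality of $T$. *)

theory Defs
  imports "HOL-Analysis.Analysis"
begin

end

theory Submission
  imports Defs
begin

text \<open>
  Given the first \<open>n\<close> pairs, let \<open>p\<close> be the orthogonal projection onto
  the span \<open>F\<close> of \<open>u\<^sub>1, \<dots>, u\<^sub>n\<close>. A volume comparison shows that a \<open>\<delta>\<close>-separated subset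
  of an \<open>r\<close>-ball in a subspace of dimension \<open>m\<close> has at most \<open>(2r/\<delta> + 1)\<^sup>m\<close> points; as
  \<open>dim F \<le> n\<close> and \<open>|T| \<ge> (2/\<epsilon> + 1)\<^sup>n\<^sup>+\<^sup>1\<close>, two distinct points \<open>a, b \<in> T\<close> have
  \<open>|p a - p b| \<le> \<epsilon>r\<close>, and \<open>u = (a - p a) - (b - p b)\<close>, \<open>v = p a - p b\<close> extend the family.

  For the volume comparison, \<open>F\<close> is moved isometrically onto a coordinate subspace \<open>span B\<close>,
  and balls in \<open>span B\<close> are replaced by open slabs of the ambient space, thickened by a fixed
  amount in the remaining coordinates: their Lebesgue measure is translation invariant along
  \<open>span B\<close> and scales by \<open>\<kappa>\<^bsup>card B\<^esup>\<close> when their radius in \<open>span B\<close> scales by \<open>\<kappa>\<close>.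
\<close>

lemma finite_subset_card_ge:
  assumes "infinite T \<or> x \<le> real (card T)"
  obtains T' where "finite T'" "T' \<subseteq> T" "x \<le> real (card T')"
proof (cases "finite T")
  case False
  then obtain T' where "finite T'" "card T' = nat \<lceil>x\<rceil>" "T' \<subseteq> T"
    using infinite_arbitrarily_large by blast
  with that show thesis
    by (metis of_nat_nat real_nat_ceiling_ge)
qed (use assms that in blast)

lemma emeasure_lborel_open_pos:
  fixes U :: "'a::euclidean_space set"
  assumes "open U" "U \<noteq> {}"
  shows "0 < emeasure lborel U"
proof -
  have "U \<notin> null_sets lebesgue"
    using open_not_negligible assms by (simp add: negligible_iff_null_sets borel_open)
  then have "U \<notin> null_sets lborel"
    using null_sets_completionI by blast
  then show ?thesis
    using assms by (simp add: borel_open null_sets_def zero_less_iff_neq_zero)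
qed

lemma emeasure_lborel_translate:
  fixes c :: "'a::euclidean_space"
  assumes "A \<in> sets borel"
  shows "emeasure lborel ((+) c -` A) = emeasure lborel A"
proof -
  have "emeasure lborel A = emeasure (distr lborel borel ((+) c)) A"
    by (simp only: lborel_distr_plus)
  also have "\<dots> = emeasure lborel ((+) c -` A)"
    using assms by (simp add: emeasure_distr)
  finally show ?thesis ..
qed

definition coord_proj :: "'a::euclidean_space set \<Rightarrow> 'a \<Rightarrow> 'a"
  where "coord_proj B x = (\<Sum>b\<in>B. (x \<bullet> b) *\<^sub>R b)"

lemma linear_coord_proj: "linear (coord_proj B)"
  by (rule linearI) (simp_all add: coord_proj_def inner_add_left scaleR_add_left
      sum.distrib scaleR_sum_right)

lemma coord_proj_in_span: "coord_proj B x \<in> span B"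
  unfolding coord_proj_def by (intro span_sum span_scale span_base)

lemma coord_proj_span:
  assumes B: "B \<subseteq> Basis" and y: "y \<in> span B"
  shows "coord_proj B y = y"
proof -
  have "coord_proj B b = id b" if "b \<in> B" for b
  proof -
    have "(\<Sum>b'\<in>B. (b \<bullet> b') *\<^sub>R b') = (\<Sum>b'\<in>B. if b' = b then b' else 0)"
      using B that by (intro sum.cong) (auto simp: inner_not_same_Basis subsetD)
    then show ?thesis
      using that finite_subset[OF B finite_Basis] by (simp add: coord_proj_def)
  qed
  then show ?thesis
    using linear_eq_on_span[OF linear_coord_proj linear_id _ y] by simp
qed

lemma coord_proj_idem: "B \<subseteq> Basis \<Longrightarrow> coord_proj B (coord_proj B x) = coord_proj B x"
  by (simp add: coord_proj_span coord_proj_in_span)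

lemma coord_proj_complement:
  assumes "B \<subseteq> Basis"
  shows "(\<Sum>j\<in>Basis - B. (x \<bullet> j) *\<^sub>R j) = x - coord_proj B x"
  using sum.subset_diff[OF assms finite_Basis, of "\<lambda>j. (x \<bullet> j) *\<^sub>R j"]
  by (simp add: euclidean_representation coord_proj_def eq_diff_eq)

definition coord_slab :: "'a::euclidean_space set \<Rightarrow> 'a \<Rightarrow> real \<Rightarrow> real \<Rightarrow> 'a set"
  where "coord_slab B c R \<rho> = {x. dist (coord_proj B x) c < R \<and> norm (x - coord_proj B x) < \<rho>}"

lemma open_coord_slab: "open (coord_slab B c R \<rho>)"
  unfolding coord_slab_def coord_proj_def
  by (intro open_Collect_conj open_Collect_less continuous_intros)

lemma bounded_coord_slab: "bounded (coord_slab B c R \<rho>)"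
proof -
  have "norm x \<le> norm c + R + \<rho>" if "x \<in> coord_slab B c R \<rho>" for x
  proof -
    have "norm x \<le> norm c + dist (coord_proj B x) c + norm (x - coord_proj B x)"
      using norm_triangle_ineq[of "coord_proj B x" "x - coord_proj B x"]
        norm_triangle_ineq[of c "coord_proj B x - c"] by (simp add: dist_norm)
    with that show ?thesis by (simp add: coord_slab_def)
  qed
  then show ?thesis by (metis bounded_iff)
qed

lemma emeasure_coord_slab_pos:
  "0 < R \<Longrightarrow> 0 < \<rho> \<Longrightarrow> 0 < emeasure lborel (coord_slab B 0 R \<rho>)"
  by (rule emeasure_lborel_open_pos[OF open_coord_slab])
    (auto simp: coord_slab_def coord_proj_def intro!: exI[of _ 0])

lemma emeasure_coord_slab_translate:
  assumes B: "B \<subseteq> Basis" and c: "c \<in> span B"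
  shows "emeasure lborel (coord_slab B c R \<rho>) = emeasure lborel (coord_slab B 0 R \<rho>)"
proof -
  have "(+) c -` coord_slab B c R \<rho> = coord_slab B 0 R \<rho>"
    using coord_proj_span[OF B c]
    by (auto simp: coord_slab_def linear_add[OF linear_coord_proj] dist_norm algebra_simps)
  then show ?thesis
    using emeasure_lborel_translate[OF borel_open[OF open_coord_slab]] by metis
qed

lemma emeasure_coord_slab_scale:
  assumes B: "B \<subseteq> Basis" and \<kappa>: "0 < \<kappa>"
  shows "emeasure lborel (coord_slab B 0 (\<kappa> * R) \<rho>)
    = ennreal \<kappa> ^ card B * emeasure lborel (coord_slab B 0 R \<rho>)"
proof -
  define c where "c j = (if j \<in> B then \<kappa> else 1)" for j :: 'a
  define L where "L x = (\<Sum>j\<in>Basis. (c j * (x \<bullet> j)) *\<^sub>R j)" for x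
  have L: "L x = \<kappa> *\<^sub>R coord_proj B x + (x - coord_proj B x)" for x
  proof -
    have "L x = (\<Sum>j\<in>Basis - B. (c j * (x \<bullet> j)) *\<^sub>R j) + (\<Sum>j\<in>B. (c j * (x \<bullet> j)) *\<^sub>R j)"
      unfolding L_def by (rule sum.subset_diff[OF B finite_Basis])
    then show ?thesis
      by (simp add: c_def coord_proj_complement[OF B]) (simp add: coord_proj_def scaleR_sum_right)
  qed
  have proj_L: "coord_proj B (L x) = \<kappa> *\<^sub>R coord_proj B x" for x
    unfolding L by (simp add: linear_add[OF linear_coord_proj] linear_diff[OF linear_coord_proj]
        linear_scale[OF linear_coord_proj] coord_proj_idem[OF B])
  have "L x - coord_proj B (L x) = x - coord_proj B x" for x
    using proj_L[of x] by (simp add: L)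
  then have preimage: "L -` coord_slab B 0 (\<kappa> * R) \<rho> = coord_slab B 0 R \<rho>"
    using \<kappa> by (auto simp: coord_slab_def proj_L)
  have c: "j \<in> Basis \<Longrightarrow> c j \<noteq> 0" for j
    using \<kappa> by (simp add: c_def)
  have [measurable]: "L \<in> borel \<rightarrow>\<^sub>M borel"
    unfolding L_def by measurable
  have "lborel = density (distr lborel borel L) (\<lambda>_. \<Prod>j\<in>Basis. \<bar>c j\<bar>)"
    using lborel_affine_euclidean[of c 0, OF c] by (simp add: L_def[abs_def])
  then have "emeasure lborel (coord_slab B 0 (\<kappa> * R) \<rho>)
      = emeasure (density (distr lborel borel L) (\<lambda>_. \<Prod>j\<in>Basis. \<bar>c j\<bar>)) (coord_slab B 0 (\<kappa> * R) \<rho>)"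
    by simp
  also have "\<dots> = (\<Prod>j\<in>Basis. ennreal \<bar>c j\<bar>) * emeasure lborel (L -` coord_slab B 0 (\<kappa> * R) \<rho>)"
    using borel_open[OF open_coord_slab, of B 0 "\<kappa> * R" \<rho>]
    by (simp add: emeasure_density emeasure_distr nn_integral_cmult prod_ennreal prod_nonneg)
  also have "(\<Prod>j\<in>Basis. ennreal \<bar>c j\<bar>) = (\<Prod>j\<in>Basis. if j \<in> B then ennreal \<kappa> else 1)"
    using \<kappa> by (intro prod.cong) (auto simp: c_def)
  also have "\<dots> = ennreal \<kappa> ^ card B"
    using B prod.If_cases[OF finite_Basis, of "\<lambda>j. j \<in> B" "\<lambda>_. ennreal \<kappa>" "\<lambda>_. 1"]
    by (simp add: Int_absorb1 Int_absorb2)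
  finally show ?thesis
    unfolding preimage .
qed

lemma card_separated_le_coord_span:
  fixes S B :: "'a::euclidean_space set"
  assumes B: "B \<subseteq> Basis" and S: "finite S" "S \<subseteq> span B" "S \<subseteq> cball 0 r"
    and \<delta>: "0 < \<delta>" and r: "0 \<le> r"
    and sep: "\<And>y z. y \<in> S \<Longrightarrow> z \<in> S \<Longrightarrow> y \<noteq> z \<Longrightarrow> \<delta> < dist y z"
  shows "real (card S) \<le> (2 * r / \<delta> + 1) ^ card B"
proof -
  define \<rho> where "\<rho> = \<delta> / 2"
  define \<kappa> where "\<kappa> = 2 * r / \<delta> + 1"
  define Z where "Z y = coord_slab B y \<rho> \<rho>" for y
  have \<rho>: "0 < \<rho>" and \<kappa>: "0 < \<kappa>" and \<kappa>\<rho>: "\<kappa> * \<rho> = r + \<rho>"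
    using \<delta> r by (simp_all add: \<rho>_def \<kappa>_def field_simps)
  have disjoint: "disjoint_family_on Z S"
    unfolding disjoint_family_on_def
  proof (intro ballI impI, rule ccontr)
    fix y z assume yz: "y \<in> S" "z \<in> S" "y \<noteq> z" and "Z y \<inter> Z z \<noteq> {}"
    then obtain x where "dist (coord_proj B x) y < \<rho>" "dist (coord_proj B x) z < \<rho>"
      by (auto simp: Z_def coord_slab_def)
    then have "dist y z < \<delta>"
      using dist_triangle3[of y z "coord_proj B x"] by (simp add: \<rho>_def)
    with sep[OF yz] show False by simp
  qed
  have cover: "(\<Union>y\<in>S. Z y) \<subseteq> coord_slab B 0 (\<kappa> * \<rho>) \<rho>"
  proof clarify
    fix x y assume "y \<in> S" "x \<in> Z y"
    moreover have "dist (coord_proj B x) 0 \<le> dist (coord_proj B x) y + dist y 0"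
      by (rule dist_triangle)
    ultimately show "x \<in> coord_slab B 0 (\<kappa> * \<rho>) \<rho>"
      using S(3) by (auto simp: Z_def coord_slab_def \<kappa>\<rho>)
  qed
  define \<mu> where "\<mu> = emeasure lborel (coord_slab B 0 \<rho> \<rho>)"
  have "of_nat (card S) * \<mu> = (\<Sum>y\<in>S. emeasure lborel (Z y))"
    using S by (simp add: Z_def \<mu>_def emeasure_coord_slab_translate[OF B] subsetD)
  also have "\<dots> = emeasure lborel (\<Union>y\<in>S. Z y)"
    using S disjoint by (intro sum_emeasure) (auto simp: Z_def[abs_def] intro: borel_open open_coord_slab)
  also have "\<dots> \<le> emeasure lborel (coord_slab B 0 (\<kappa> * \<rho>) \<rho>)"
    using cover by (intro emeasure_mono) (auto intro: borel_open open_coord_slab)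
  also have "\<dots> = ennreal (\<kappa> ^ card B) * \<mu>"
    using \<kappa> by (simp add: \<mu>_def emeasure_coord_slab_scale[OF B] ennreal_power)
  finally have "of_nat (card S) * \<mu> \<le> ennreal (\<kappa> ^ card B) * \<mu>" .
  moreover have "\<mu> \<noteq> 0" "\<mu> \<noteq> \<infinity>"
    using emeasure_coord_slab_pos[OF \<rho> \<rho>, of B] emeasure_bounded_finite[OF bounded_coord_slab, of B 0 \<rho> \<rho>]
    by (simp_all add: \<mu>_def)
  ultimately have "ennreal (real (card S)) \<le> ennreal (\<kappa> ^ card B)"
    by (simp add: ennreal_mult_le_mult_iff mult.commute[of _ \<mu>] ennreal_of_nat_eq_real_of_nat)
  then show ?thesis
    using \<kappa> by (simp add: \<kappa>_def ennreal_le_iff)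
qed

lemma card_separated_le_subspace:
  fixes F S :: "'a::euclidean_space set"
  assumes F: "subspace F" and S: "finite S" "S \<subseteq> F" "S \<subseteq> cball 0 r"
    and \<delta>: "0 < \<delta>" and r: "0 \<le> r"
    and sep: "\<And>y z. y \<in> S \<Longrightarrow> z \<in> S \<Longrightarrow> y \<noteq> z \<Longrightarrow> \<delta> < dist y z"
  shows "real (card S) \<le> (2 * r / \<delta> + 1) ^ dim F"
proof -
  have "dim F \<le> card (Basis :: 'a set)"
    using dim_subset[of F UNIV] dim_UNIV by simp
  then obtain B :: "'a set" where B: "B \<subseteq> Basis" "card B = dim F"
    by (metis obtain_subset_with_card_n)
  then have "dim (span B) = dim F"
    by (metis dim_span_eq_card_independent independent_Basis independent_mono)
  then obtain f where f: "linear f" "f ` F = span B" "\<And>x. x \<in> F \<Longrightarrow> norm (f x) = norm x"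
    by (metis isometry_subspaces[OF F subspace_span])
  have dist_f: "dist (f y) (f z) = dist y z" if "y \<in> S" "z \<in> S" for y z
    using that S(2) f(3)[of "y - z"] F by (auto simp: dist_norm linear_diff[OF f(1)] subspace_diff subsetD)
  then have "inj_on f S"
    by (metis dist_eq_0_iff inj_onI)
  moreover have "real (card (f ` S)) \<le> (2 * r / \<delta> + 1) ^ card B"
  proof (rule card_separated_le_coord_span[OF B(1) _ _ _ \<delta> r])
    show "finite (f ` S)" "f ` S \<subseteq> span B" "f ` S \<subseteq> cball 0 r"
      using S f(2,3) by (auto simp: subset_iff)
    fix y z assume "y \<in> f ` S" "z \<in> f ` S" "y \<noteq> z"
    then obtain y' z' where "y' \<in> S" "z' \<in> S" "y' \<noteq> z'" "y = f y'" "z = f z'"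
      by blast
    then show "\<delta> < dist y z"
      using sep dist_f by simp
  qed
  ultimately show ?thesis
    by (simp add: card_image B(2))
qed

lemma orthogonal_projection_exists:
  fixes F :: "'a::euclidean_space set"
  assumes F: "subspace F"
  obtains p where "\<And>x. p x \<in> F" "\<And>x w. w \<in> F \<Longrightarrow> orthogonal (x - p x) w"
    "\<And>x. norm (p x) \<le> norm x"
proof -
  have "\<exists>y. y \<in> F \<and> (\<forall>w\<in>F. orthogonal (x - y) w)" for x
  proof -
    obtain y z where "y \<in> span F" "\<And>w. w \<in> span F \<Longrightarrow> orthogonal z w" "x = y + z"
      using orthogonal_subspace_decomp_exists[of F x] by blast
    moreover have "span F = F"
      using F by (simp add: span_eq_iff)
    ultimately show ?thesis
      by (intro exI[of _ y]) simp
  qed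
  then obtain p where p: "\<And>x. p x \<in> F" and p_orth: "\<And>x w. w \<in> F \<Longrightarrow> orthogonal (x - p x) w"
    by metis
  have "norm (p x) \<le> norm x" for x
  proof -
    have "(norm x)\<^sup>2 = (norm (p x))\<^sup>2 + (norm (x - p x))\<^sup>2"
      using norm_add_Pythagorean[of "p x" "x - p x"] p_orth[OF p] by (simp add: orthogonal_commute)
    then show ?thesis
      by (simp add: power2_le_imp_le)
  qed
  with p p_orth show thesis
    by (rule that)
qed

lemma pair_with_difference_near_orthogonal_complement:
  fixes T F :: "'a::euclidean_space set"
  assumes F: "subspace F" and T: "finite T" "T \<subseteq> cball 0 r"
    and \<delta>: "0 < \<delta>" and r: "0 \<le> r" and card: "(2 * r / \<delta> + 1) ^ dim F < real (card T)"
  obtains a b u v where "a \<in> T" "b \<in> T" "a \<noteq> b" "a - b = u + v" "norm v \<le> \<delta>"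
    "\<And>w. w \<in> F \<Longrightarrow> orthogonal u w"
proof -
  obtain p where p: "\<And>x. p x \<in> F" and p_orth: "\<And>x w. w \<in> F \<Longrightarrow> orthogonal (x - p x) w"
    and p_norm: "\<And>x. norm (p x) \<le> norm x"
    using orthogonal_projection_exists[OF F] by blast
  obtain a b where ab: "a \<in> T" "b \<in> T" "a \<noteq> b" "dist (p a) (p b) \<le> \<delta>"
  proof (rule ccontr)
    assume "\<not> thesis"
    then have sep: "\<And>a b. a \<in> T \<Longrightarrow> b \<in> T \<Longrightarrow> a \<noteq> b \<Longrightarrow> \<delta> < dist (p a) (p b)"
      using that by force
    then have "inj_on p T"
      using \<delta> by (metis dist_self inj_onI not_less_iff_gr_or_eq)
    moreover have "real (card (p ` T)) \<le> (2 * r / \<delta> + 1) ^ dim F"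
    proof (rule card_separated_le_subspace[OF F _ _ _ \<delta> r])
      show "finite (p ` T)" "p ` T \<subseteq> F"
        using T(1) p by auto
      show "p ` T \<subseteq> cball 0 r"
        using T(2) p_norm by (force intro: order_trans)
      show "\<delta> < dist y z" if "y \<in> p ` T" "z \<in> p ` T" "y \<noteq> z" for y z
        using that sep by auto
    qed
    ultimately show False
      using card by (simp add: card_image)
  qed
  show thesis
  proof (rule that[OF ab(1-3)])
    show "a - b = (a - p a - (b - p b)) + (p a - p b)"
      by simp
    show "norm (p a - p b) \<le> \<delta>"
      using ab(4) by (simp add: dist_norm)
    show "orthogonal (a - p a - (b - p b)) w" if "w \<in> F" for w
      using p_orth[OF that] by (simp add: orthogonal_def inner_diff_left)
  qed
qed

lemma differences_with_orthogonal_main_parts: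
  fixes T :: "'a::euclidean_space set"
  assumes T: "finite T" "T \<subseteq> cball 0 r" and \<delta>: "0 < \<delta>" and r: "0 < r"
    and card: "(2 * r / \<delta> + 1) ^ n \<le> real (card T)"
  shows "\<exists>t s u v :: nat \<Rightarrow> 'a.
           (\<forall>k\<in>{1..n}. t k \<in> T \<and> s k \<in> T \<and> t k - s k \<noteq> 0 \<and>
                         t k - s k = u k + v k \<and> norm (v k) \<le> \<delta>) \<and>
           (\<forall>j\<in>{1..n}. \<forall>k\<in>{1..n}. j \<noteq> k \<longrightarrow> inner (u j) (u k) = 0)"
  using card
proof (induction n)
  case 0
  show ?case by simp
next
  case (Suc n)
  have base: "1 < 2 * r / \<delta> + 1"
    using r \<delta> by simp
  have "(2 * r / \<delta> + 1) ^ n \<le> real (card T)"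
    by (rule order_trans[OF power_increasing Suc.prems]) (use base in auto)
  then obtain t s u v :: "nat \<Rightarrow> 'a" where
    pairs: "\<forall>k\<in>{1..n}. t k \<in> T \<and> s k \<in> T \<and> t k - s k \<noteq> 0 \<and>
                         t k - s k = u k + v k \<and> norm (v k) \<le> \<delta>" and
    orth: "\<forall>j\<in>{1..n}. \<forall>k\<in>{1..n}. j \<noteq> k \<longrightarrow> inner (u j) (u k) = 0"
    using Suc.IH by blast
  define F where "F = span (u ` {1..n})"
  have "dim F \<le> n"
    unfolding F_def dim_span using dim_le_card'[of "u ` {1..n}"] card_image_le[of "{1..n}" u]
    by simp
  then have "(2 * r / \<delta> + 1) ^ dim F < real (card T)"
    using power_strict_increasing[of "dim F" "Suc n", OF _ base] Suc.prems by simp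
  then obtain a b u\<^sub>0 v\<^sub>0 where new: "a \<in> T" "b \<in> T" "a \<noteq> b" "a - b = u\<^sub>0 + v\<^sub>0" "norm v\<^sub>0 \<le> \<delta>"
    and u\<^sub>0: "\<And>w. w \<in> F \<Longrightarrow> orthogonal u\<^sub>0 w"
    using pair_with_difference_near_orthogonal_complement[OF _ T \<delta> less_imp_le[OF r]]
    unfolding F_def by blast
  have new_orth: "inner (u k) u\<^sub>0 = 0" "inner u\<^sub>0 (u k) = 0" if "k \<in> {1..n}" for k
    using u\<^sub>0[of "u k"] that by (simp_all add: F_def span_base orthogonal_def inner_commute)
  have range: "{1..Suc n} = insert (Suc n) {1..n}"
    by auto
  show ?case
  proof (intro exI conjI)
    show "\<forall>k\<in>{1..Suc n}. (t(Suc n := a)) k \<in> T \<and> (s(Suc n := b)) k \<in> T \<and>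
        (t(Suc n := a)) k - (s(Suc n := b)) k \<noteq> 0 \<and>
        (t(Suc n := a)) k - (s(Suc n := b)) k = (u(Suc n := u\<^sub>0)) k + (v(Suc n := v\<^sub>0)) k \<and>
        norm ((v(Suc n := v\<^sub>0)) k) \<le> \<delta>"
      unfolding range using pairs new by auto
    show "\<forall>j\<in>{1..Suc n}. \<forall>k\<in>{1..Suc n}. j \<noteq> k \<longrightarrow> inner ((u(Suc n := u\<^sub>0)) j) ((u(Suc n := u\<^sub>0)) k) = 0"
      unfolding range using orth new_orth by auto
  qed
qed

theorem lemma3p5:
  fixes r \<epsilon> :: real and n :: nat and T :: "'a::euclidean_space set"
  assumes "r > 0" and "0 < \<epsilon>" and "\<epsilon> < 1" and "n \<ge> 1"
    and "T \<subseteq> cball 0 r"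
    and "infinite T \<or> real (card T) \<ge> (2 / \<epsilon> + 1) ^ n"
  shows "\<exists>t s u v :: nat \<Rightarrow> 'a.
           (\<forall>k\<in>{1..n}. t k \<in> T \<and> s k \<in> T \<and> t k - s k \<noteq> 0 \<and>
                         t k - s k = u k + v k \<and> norm (v k) \<le> \<epsilon> * r) \<and>
           (\<forall>j\<in>{1..n}. \<forall>k\<in>{1..n}. j \<noteq> k \<longrightarrow> inner (u j) (u k) = 0)"
proof -
  obtain T' where T': "finite T'" "T' \<subseteq> T" "(2 / \<epsilon> + 1) ^ n \<le> real (card T')"
    using assms(6) by (rule finite_subset_card_ge)
  have "2 * r / (\<epsilon> * r) = 2 / \<epsilon>"
    using assms(1) by simp
  then have "\<exists>t s u v :: nat \<Rightarrow> 'a.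
           (\<forall>k\<in>{1..n}. t k \<in> T' \<and> s k \<in> T' \<and> t k - s k \<noteq> 0 \<and>
                         t k - s k = u k + v k \<and> norm (v k) \<le> \<epsilon> * r) \<and>
           (\<forall>j\<in>{1..n}. \<forall>k\<in>{1..n}. j \<noteq> k \<longrightarrow> inner (u j) (u k) = 0)"
    using T' assms(1,2,5) by (intro differences_with_orthogonal_main_parts) auto
  then show ?thesis
    using T'(2) by blast
qed

end
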